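(* Let $G$ be a nonabelian group and let $\psi_1,\dots,\psi_t\in\operatorname{End}(G)$ satisfy $\psi_i([G,G])\le Z(G)$ for all $i$ and $[\psi_i(G),\psi_j(G)]\subseteq Z(G)$ for all $1\le i,j\le t$. Fix $1\le i,j\le t$ and $\alpha,\beta\in\mathscr{E}$, and write $\circ_i=\circ_{\psi_i,\alpha}$, $\circ_j=\circ_{\psi_j,\beta}$. For $g\in G$ let $\widetilde g$ be the inverse of $g$ in $(G,\circ_i)$ and $\overline g$ the inverse of $g$ in $(G,\circ_j)$. Then \[R(g,h)=\Big(\widetilde g\circ_i(g\circ_j h),\ \overline{\widetilde g\circ_i(g\circ_j h)}\circ_j g\circ_j h\Big),\qquad R'(g,h)=\Big((g\circ_j h)\circ_i\widetilde g,\ \overline{(g\circ_j h)\circ_i\widetilde g}\circ_j g\circ_j h\Big)\] are mutually inverse non-degenerate set-theoretic solutions to the Yang–Baxter equation on $G$. Furthermore, $R$ is involutive (and hence $R'=R$) if and only if $(G,\circ_i)$ is abelian.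
   Context: $Z(G)$ is the center and $[G,G]$ the commutator subgroup. $\mathscr{E}$ denotes the set of formal expressions $\alpha=n_1\phi_1+\cdots+n_s\phi_s$ with $n_k\in\mathbb Z$, $\phi_k\in\operatorname{End}(G)$ (free group on $\operatorname{End}(G)$, written additively), acting on $G$ by $\alpha(g)=\phi_1(g^{n_1})\cdots\phi_s(g^{n_s})$. For $\psi\in\operatorname{End}(G)$ and $\alpha\in\mathscr{E}$, $g\circ_{\psi,\alpha}h=g\,\psi(\alpha(g))\,h\,\psi(\alpha(g))^{-1}$; these are group operations on $G$. A set-theoretic solution to the Yang–Baxter equation on a set $X$ is a map $R:X\times X\to X\times X$ with $(R\times\mathrm{id})(\mathrm{id}\times R)(R\times\mathrm{id})=(\mathrm{id}\times R)(R\times\mathrm{id})(\mathrm{id}\times R)$ on $X^3$; it is non-degenerate if, writing $R(x,y)=(\sigma_x(y),\tau_y(x))$, all maps $\sigma_x$ and $\tau_y$ are bijections; it is involutive if $R^2=\mathrm{id}$. *)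

theory Defs
  imports "HOL-Algebra.Algebra"
begin

definition center :: "('a, 'b) monoid_scheme \<Rightarrow> 'a set" where
  "center G = {z \<in> carrier G. \<forall>g \<in> carrier G. z \<otimes>\<^bsub>G\<^esub> g = g \<otimes>\<^bsub>G\<^esub> z}"

text \<open>Commutator [a,b] = a b a^-1 b^-1 (same convention as derived_set).\<close>
definition commut :: "('a, 'b) monoid_scheme \<Rightarrow> 'a \<Rightarrow> 'a \<Rightarrow> 'a" where
  "commut G a b = a \<otimes>\<^bsub>G\<^esub> b \<otimes>\<^bsub>G\<^esub> inv\<^bsub>G\<^esub> a \<otimes>\<^bsub>G\<^esub> inv\<^bsub>G\<^esub> b"

text \<open>Formal expressions n_1 phi_1 + ... + n_s phi_s, represented by lists of pairs (n_k, phi_k)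
  with each phi_k an endomorphism of G.\<close>
definition exprs :: "('a, 'b) monoid_scheme \<Rightarrow> (int \<times> ('a \<Rightarrow> 'a)) list set" where
  "exprs G = {\<alpha>. \<forall>p \<in> set \<alpha>. snd p \<in> hom G G}"

fun expr_app :: "('a, 'b) monoid_scheme \<Rightarrow> (int \<times> ('a \<Rightarrow> 'a)) list \<Rightarrow> 'a \<Rightarrow> 'a" where
  "expr_app G [] g = \<one>\<^bsub>G\<^esub>"
| "expr_app G ((n, \<phi>) # \<alpha>) g = \<phi> (g [^]\<^bsub>G\<^esub> n) \<otimes>\<^bsub>G\<^esub> expr_app G \<alpha> g"

definition circ :: "('a, 'b) monoid_scheme \<Rightarrow> ('a \<Rightarrow> 'a) \<Rightarrow> (int \<times> ('a \<Rightarrow> 'a)) list \<Rightarrow> 'a \<Rightarrow> 'a \<Rightarrow> 'a" where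
  "circ G \<psi> \<alpha> g h = g \<otimes>\<^bsub>G\<^esub> \<psi> (expr_app G \<alpha> g) \<otimes>\<^bsub>G\<^esub> h \<otimes>\<^bsub>G\<^esub> inv\<^bsub>G\<^esub> (\<psi> (expr_app G \<alpha> g))"

definition circ_grp :: "('a, 'b) monoid_scheme \<Rightarrow> ('a \<Rightarrow> 'a) \<Rightarrow> (int \<times> ('a \<Rightarrow> 'a)) list \<Rightarrow> 'a monoid" where
  "circ_grp G \<psi> \<alpha> = \<lparr>carrier = carrier G, monoid.mult = circ G \<psi> \<alpha>, one = \<one>\<^bsub>G\<^esub>\<rparr>"

text \<open>R x id and id x R on triples.\<close>
definition R12 :: "('a \<times> 'a \<Rightarrow> 'a \<times> 'a) \<Rightarrow> 'a \<times> 'a \<times> 'a \<Rightarrow> 'a \<times> 'a \<times> 'a" where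
  "R12 R p = (fst (R (fst p, fst (snd p))), snd (R (fst p, fst (snd p))), snd (snd p))"

definition R23 :: "('a \<times> 'a \<Rightarrow> 'a \<times> 'a) \<Rightarrow> 'a \<times> 'a \<times> 'a \<Rightarrow> 'a \<times> 'a \<times> 'a" where
  "R23 R p = (fst p, fst (R (snd p)), snd (R (snd p)))"

definition YBE_solution :: "'a set \<Rightarrow> ('a \<times> 'a \<Rightarrow> 'a \<times> 'a) \<Rightarrow> bool" where
  "YBE_solution S R \<longleftrightarrow>
     (\<forall>x \<in> S. \<forall>y \<in> S. fst (R (x, y)) \<in> S \<and> snd (R (x, y)) \<in> S) \<and>
     (\<forall>x \<in> S. \<forall>y \<in> S. \<forall>z \<in> S.
        R12 R (R23 R (R12 R (x, y, z))) = R23 R (R12 R (R23 R (x, y, z))))"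

definition nondegenerate :: "'a set \<Rightarrow> ('a \<times> 'a \<Rightarrow> 'a \<times> 'a) \<Rightarrow> bool" where
  "nondegenerate S R \<longleftrightarrow>
     (\<forall>x \<in> S. bij_betw (\<lambda>y. fst (R (x, y))) S S) \<and>
     (\<forall>y \<in> S. bij_betw (\<lambda>x. snd (R (x, y))) S S)"

definition involutive :: "'a set \<Rightarrow> ('a \<times> 'a \<Rightarrow> 'a \<times> 'a) \<Rightarrow> bool" where
  "involutive S R \<longleftrightarrow> (\<forall>x \<in> S. \<forall>y \<in> S. R (R (x, y)) = (x, y))"

end

theory Submission
  imports Defs
begin

text \<open>With \<open>f = \<psi> \<circ> \<alpha>\<close> and \<open>c x\<close> conjugation by \<open>x\<close>, the operation is
  \<open>g \<circ>\<^sub>\<psi>\<^sub>,\<^sub>\<alpha> h = g \<cdot> c (f g) h\<close>. Modulo \<open>[G,G]\<close> every formal expression \<open>\<alpha>\<close> is a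
  homomorphism, so the hypotheses on \<open>\<psi>\<close> make \<open>g \<mapsto> c (f g)\<close> a homomorphism
  \<open>G \<rightarrow> Inn G\<close> with abelian image, hence constant on conjugacy classes. That is what makes
  \<open>\<circ>\<^sub>\<psi>\<^sub>,\<^sub>\<alpha>\<close> associative and \<open>(G, \<circ>\<^sub>i, \<circ>\<^sub>j)\<close> a skew brace with additive group
  \<open>(G, \<circ>\<^sub>i)\<close>.

  In a skew brace \<open>(A, +, \<circ>)\<close> with \<open>\<lambda>\<^sub>x y = -x + x \<circ> y\<close>, the map
  \<open>R(x, y) = (\<lambda>\<^sub>x y, (\<lambda>\<^sub>x y)\<^sup>-\<^sup>1 \<circ> x \<circ> y)\<close> satisfies the braid relation because the
  bijection \<open>(x, y, z) \<mapsto> (x, x \<circ> y, x \<circ> y \<circ> z)\<close> conjugates \<open>R \<times> id\<close> and \<open>id \<times> R\<close> into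
  maps built from \<open>+\<close> alone. Its inverse is the solution of the skew brace with the opposite
  additive group, here \<open>R'\<close>; so \<open>R\<close> is involutive iff \<open>R = R'\<close>, iff \<open>+\<close> is commutative.\<close>

section \<open>Conjugation\<close>

definition conj_by :: "('a, 'b) monoid_scheme \<Rightarrow> 'a \<Rightarrow> 'a \<Rightarrow> 'a" where
  "conj_by G c w = c \<otimes>\<^bsub>G\<^esub> w \<otimes>\<^bsub>G\<^esub> inv\<^bsub>G\<^esub> c"

context group begin

lemma inv_mult_cancel_left [simp]: "c \<in> carrier G \<Longrightarrow> r \<in> carrier G \<Longrightarrow> inv c \<otimes> (c \<otimes> r) = r"
  by (simp add: m_assoc [symmetric])

lemma mult_inv_cancel_left [simp]: "c \<in> carrier G \<Longrightarrow> r \<in> carrier G \<Longrightarrow> c \<otimes> (inv c \<otimes> r) = r"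
  by (simp add: m_assoc [symmetric])

lemma conj_by_closed [simp]: "c \<in> carrier G \<Longrightarrow> w \<in> carrier G \<Longrightarrow> conj_by G c w \<in> carrier G"
  by (simp add: conj_by_def)

lemma conj_by_one [simp]: "w \<in> carrier G \<Longrightarrow> conj_by G \<one> w = w"
  by (simp add: conj_by_def)

lemma conj_by_one_right [simp]: "c \<in> carrier G \<Longrightarrow> conj_by G c \<one> = \<one>"
  by (simp add: conj_by_def)

lemma conj_by_mult:
  "\<lbrakk>c \<in> carrier G; x \<in> carrier G; y \<in> carrier G\<rbrakk> \<Longrightarrow>
    conj_by G c (x \<otimes> y) = conj_by G c x \<otimes> conj_by G c y"
  by (simp add: conj_by_def m_assoc)

lemma conj_by_conj_by:
  "\<lbrakk>c \<in> carrier G; d \<in> carrier G; w \<in> carrier G\<rbrakk> \<Longrightarrow>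
    conj_by G (c \<otimes> d) w = conj_by G c (conj_by G d w)"
  by (simp add: conj_by_def m_assoc inv_mult_group)

lemma conj_by_central_factor:
  assumes z: "z \<in> center G" and c: "c \<in> carrier G" and w: "w \<in> carrier G"
  shows "conj_by G (z \<otimes> c) w = conj_by G c w"
proof -
  have zc: "z \<in> carrier G" using z by (simp add: center_def)
  have "conj_by G (z \<otimes> c) w = z \<otimes> conj_by G c w \<otimes> inv z"
    using zc c w by (simp add: conj_by_def m_assoc inv_mult_group)
  also have "\<dots> = conj_by G c w \<otimes> z \<otimes> inv z"
    using z c w by (simp add: center_def)
  finally show ?thesis using zc c w by (simp add: m_assoc)
qed

lemma conj_by_commute:
  assumes p: "p \<in> carrier G" and q: "q \<in> carrier G" and w: "w \<in> carrier G"
    and central: "commut G p q \<in> center G"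
  shows "conj_by G p (conj_by G q w) = conj_by G q (conj_by G p w)"
proof -
  have "p \<otimes> q = commut G p q \<otimes> (q \<otimes> p)"
    using p q by (simp add: commut_def m_assoc)
  then show ?thesis
    using p q w conj_by_central_factor [OF central] by (simp add: conj_by_conj_by [symmetric])
qed

end

section \<open>Formal expressions modulo the commutator subgroup\<close>

lemma (in comm_group) hom_int_pow_pointwise:
  "h \<in> hom H G \<Longrightarrow> (\<lambda>x. h x [^] (n :: int)) \<in> hom H G"
  by (auto simp: hom_def Pi_def int_pow_distrib)

context group begin

lemma expr_app_closed: "\<alpha> \<in> exprs G \<Longrightarrow> x \<in> carrier G \<Longrightarrow> expr_app G \<alpha> x \<in> carrier G"
  by (induction \<alpha>) (auto simp: exprs_def hom_in_carrier)

lemma expr_app_hom_Mod_derived: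
  assumes "\<alpha> \<in> exprs G"
  shows "(\<lambda>x. derived G (carrier G) #> expr_app G \<alpha> x) \<in> hom G (G Mod derived G (carrier G))"
proof -
  let ?D = "derived G (carrier G)"
  interpret N: normal ?D G by (rule derived_self_is_normal)
  show ?thesis
    using assms
  proof (induction \<alpha>)
    case Nil
    show ?case
      using derived_in_carrier derived_is_subgroup N.subgroup_in_rcosets
      by (auto intro!: homI simp: FactGroup_def subgroup_mult_id)
  next
    case (Cons p \<alpha>)
    let ?Q = "G Mod ?D" and ?\<pi> = "\<lambda>a. ?D #> a"
    interpret Q: comm_group ?Q by (rule derived_quot_is_comm_group)
    obtain n \<phi> where p: "p = (n, \<phi>)" by fastforce
    have \<phi>: "\<phi> \<in> hom G G" and \<alpha>: "\<alpha> \<in> exprs G" using Cons.prems p by (auto simp: exprs_def)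
    have \<pi>: "?\<pi> \<in> hom G ?Q" by (rule N.r_coset_hom_Mod)
    have \<pi>\<phi>: "?\<pi> \<circ> \<phi> \<in> hom G ?Q"
      using \<phi> \<pi> by (auto simp: hom_def Pi_def)
    have "?\<pi> (expr_app G ((n, \<phi>) # \<alpha>) x) = (?\<pi> \<circ> \<phi>) x [^]\<^bsub>?Q\<^esub> n \<otimes>\<^bsub>?Q\<^esub> ?\<pi> (expr_app G \<alpha> x)"
      if x: "x \<in> carrier G" for x
    proof -
      have "?\<pi> (\<phi> (x [^] n)) = (?\<pi> \<circ> \<phi>) x [^]\<^bsub>?Q\<^esub> n"
        using hom_int_pow [OF \<pi>\<phi> x is_group Q.is_group] by simp
      then show ?thesis
        using x \<phi> \<pi> \<alpha> expr_app_closed by (simp add: hom_mult hom_in_carrier)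
    qed
    moreover have "(\<lambda>x. (?\<pi> \<circ> \<phi>) x [^]\<^bsub>?Q\<^esub> n \<otimes>\<^bsub>?Q\<^esub> ?\<pi> (expr_app G \<alpha> x)) \<in> hom G ?Q"
      using Q.hom_group_mult [OF Q.hom_int_pow_pointwise [OF \<pi>\<phi>] Cons.IH [OF \<alpha>]] .
    ultimately show ?case
      unfolding p by (simp add: hom_def Pi_def)
  qed
qed

lemma expr_app_mult_mod_derived:
  assumes "\<alpha> \<in> exprs G" "x \<in> carrier G" "y \<in> carrier G"
  shows "\<exists>k \<in> derived G (carrier G). expr_app G \<alpha> (x \<otimes> y) = k \<otimes> (expr_app G \<alpha> x \<otimes> expr_app G \<alpha> y)"
proof -
  interpret N: normal "derived G (carrier G)" G by (rule derived_self_is_normal)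
  have "derived G (carrier G) #> expr_app G \<alpha> (x \<otimes> y) =
      derived G (carrier G) #> (expr_app G \<alpha> x \<otimes> expr_app G \<alpha> y)"
    using hom_mult [OF expr_app_hom_Mod_derived] hom_mult [OF N.r_coset_hom_Mod] assms expr_app_closed
    by simp
  then have "expr_app G \<alpha> (x \<otimes> y) \<in> derived G (carrier G) #> (expr_app G \<alpha> x \<otimes> expr_app G \<alpha> y)"
    using assms expr_app_closed by (intro repr_independenceD [OF N.subgroup_axioms]) auto
  then show ?thesis by (auto simp: r_coset_def)
qed

end

section \<open>Twisted group operations\<close>

text \<open>\<open>g \<mapsto> conj_by G (f g)\<close> is a homomorphism \<open>G \<rightarrow> Inn G\<close> with abelian image.\<close>

locale twisting_map = group G for G (structure) +
  fixes f :: "'a \<Rightarrow> 'a"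
  assumes f_closed [simp]: "x \<in> carrier G \<Longrightarrow> f x \<in> carrier G"
    and f_mult_mod_center:
      "\<lbrakk>x \<in> carrier G; y \<in> carrier G\<rbrakk> \<Longrightarrow> \<exists>z \<in> center G. f (x \<otimes> y) = z \<otimes> (f x \<otimes> f y)"
    and f_commut_center:
      "\<lbrakk>x \<in> carrier G; y \<in> carrier G\<rbrakk> \<Longrightarrow> commut G (f x) (f y) \<in> center G"
begin

lemma conj_by_f_mult:
  assumes "x \<in> carrier G" "y \<in> carrier G" "w \<in> carrier G"
  shows "conj_by G (f (x \<otimes> y)) w = conj_by G (f x) (conj_by G (f y) w)"
proof -
  obtain z where "z \<in> center G" "f (x \<otimes> y) = z \<otimes> (f x \<otimes> f y)"
    using f_mult_mod_center assms by blast
  then show ?thesis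
    using assms f_closed by (simp add: conj_by_central_factor conj_by_conj_by)
qed

lemma conj_by_f_commute:
  "\<lbrakk>x \<in> carrier G; y \<in> carrier G; w \<in> carrier G\<rbrakk> \<Longrightarrow>
    conj_by G (f x) (conj_by G (f y) w) = conj_by G (f y) (conj_by G (f x) w)"
  by (simp add: conj_by_commute f_closed f_commut_center)

lemma conj_by_f_one [simp]:
  assumes w: "w \<in> carrier G"
  shows "conj_by G (f \<one>) w = w"
proof -
  define v where "v = conj_by G (inv (f \<one>)) w"
  have v: "v \<in> carrier G" and w_eq: "w = conj_by G (f \<one>) v"
    using w f_closed by (simp_all add: v_def conj_by_conj_by [symmetric])
  show ?thesis
    using conj_by_f_mult [of \<one> \<one> v] v by (simp add: w_eq)
qed

lemma conj_by_f_cancel_inv [simp]: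
  "\<lbrakk>x \<in> carrier G; w \<in> carrier G\<rbrakk> \<Longrightarrow> conj_by G (f x) (conj_by G (f (inv x)) w) = w"
  using conj_by_f_mult [of x "inv x" w] by simp

lemma conj_by_f_conj_by:
  assumes c: "c \<in> carrier G" and x: "x \<in> carrier G" and w: "w \<in> carrier G"
  shows "conj_by G (f (conj_by G c x)) w = conj_by G (f x) w"
proof -
  have "conj_by G (f (conj_by G c x)) w = conj_by G (f c) (conj_by G (f x) (conj_by G (f (inv c)) w))"
    using c x w unfolding conj_by_def [of G c x] by (simp add: conj_by_f_mult)
  also have "\<dots> = conj_by G (f x) w"
    using c x w by (simp add: conj_by_f_commute [of c x])
  finally show ?thesis .
qed

end

definition twisted :: "('a, 'b) monoid_scheme \<Rightarrow> ('a \<Rightarrow> 'a) \<Rightarrow> 'a monoid" where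
  "twisted G f = \<lparr>carrier = carrier G,
     monoid.mult = (\<lambda>g h. g \<otimes>\<^bsub>G\<^esub> f g \<otimes>\<^bsub>G\<^esub> h \<otimes>\<^bsub>G\<^esub> inv\<^bsub>G\<^esub> (f g)), one = \<one>\<^bsub>G\<^esub>\<rparr>"

lemma carrier_twisted [simp]: "carrier (twisted G f) = carrier G"
  and one_twisted [simp]: "\<one>\<^bsub>twisted G f\<^esub> = \<one>\<^bsub>G\<^esub>"
  by (simp_all add: twisted_def)

lemma circ_grp_eq_twisted: "circ_grp G \<psi> \<alpha> = twisted G (\<lambda>g. \<psi> (expr_app G \<alpha> g))"
  by (simp add: circ_grp_def twisted_def fun_eq_iff circ_def)

lemma circ_eq_mult_twisted: "circ G \<psi> \<alpha> = monoid.mult (twisted G (\<lambda>g. \<psi> (expr_app G \<alpha> g)))"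
  by (simp add: twisted_def fun_eq_iff circ_def)

context twisting_map begin

lemma twisted_mult:
  "\<lbrakk>g \<in> carrier G; h \<in> carrier G\<rbrakk> \<Longrightarrow> g \<otimes>\<^bsub>twisted G f\<^esub> h = g \<otimes> conj_by G (f g) h"
  by (simp add: twisted_def conj_by_def m_assoc)

lemma twisted_inv_left:
  "x \<in> carrier G \<Longrightarrow> conj_by G (f (inv x)) (inv x) \<otimes>\<^bsub>twisted G f\<^esub> x = \<one>"
  by (simp add: twisted_mult conj_by_f_conj_by conj_by_mult [symmetric])

lemma group_twisted: "group (twisted G f)"
proof (rule groupI)
  fix x y z
  assume "x \<in> carrier (twisted G f)" "y \<in> carrier (twisted G f)" "z \<in> carrier (twisted G f)"
  then have x: "x \<in> carrier G" and y: "y \<in> carrier G" and z: "z \<in> carrier G" by simp_all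
  have "(x \<otimes>\<^bsub>twisted G f\<^esub> y) \<otimes>\<^bsub>twisted G f\<^esub> z
      = (x \<otimes> conj_by G (f x) y) \<otimes> conj_by G (f x) (conj_by G (f (conj_by G (f x) y)) z)"
    using x y z by (simp add: twisted_mult conj_by_f_mult)
  also have "\<dots> = (x \<otimes> conj_by G (f x) y) \<otimes> conj_by G (f x) (conj_by G (f y) z)"
    using x y z by (simp add: conj_by_f_conj_by)
  also have "\<dots> = x \<otimes>\<^bsub>twisted G f\<^esub> (y \<otimes>\<^bsub>twisted G f\<^esub> z)"
    using x y z by (simp add: twisted_mult conj_by_mult m_assoc)
  finally show "x \<otimes>\<^bsub>twisted G f\<^esub> y \<otimes>\<^bsub>twisted G f\<^esub> z = x \<otimes>\<^bsub>twisted G f\<^esub> (y \<otimes>\<^bsub>twisted G f\<^esub> z)" .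
next
  fix x assume "x \<in> carrier (twisted G f)"
  then show "\<exists>y \<in> carrier (twisted G f). y \<otimes>\<^bsub>twisted G f\<^esub> x = \<one>\<^bsub>twisted G f\<^esub>"
    using twisted_inv_left by force
qed (simp_all add: twisted_mult)

lemma inv_twisted:
  "x \<in> carrier G \<Longrightarrow> inv\<^bsub>twisted G f\<^esub> x = conj_by G (f (inv x)) (inv x)"
  by (rule group.inv_equality [OF group_twisted]) (simp_all add: twisted_inv_left)

end

lemma (in group) twisting_map_expr_app:
  assumes \<psi>: "\<psi> \<in> hom G G" and \<psi>_derived: "\<psi> ` derived G (carrier G) \<subseteq> center G"
    and \<psi>_commut: "\<forall>a \<in> carrier G. \<forall>b \<in> carrier G. commut G (\<psi> a) (\<psi> b) \<in> center G"
    and \<alpha>: "\<alpha> \<in> exprs G"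
  shows "twisting_map G (\<lambda>g. \<psi> (expr_app G \<alpha> g))"
proof (unfold_locales)
  fix x y assume x: "x \<in> carrier G" and y: "y \<in> carrier G"
  show "\<psi> (expr_app G \<alpha> x) \<in> carrier G"
    using \<psi> \<alpha> x by (simp add: expr_app_closed hom_in_carrier)
  obtain k where k: "k \<in> derived G (carrier G)"
    and eq: "expr_app G \<alpha> (x \<otimes> y) = k \<otimes> (expr_app G \<alpha> x \<otimes> expr_app G \<alpha> y)"
    using expr_app_mult_mod_derived [OF \<alpha> x y] by blast
  have "k \<in> carrier G"
    using k derived_in_carrier by blast
  then have "\<psi> (expr_app G \<alpha> (x \<otimes> y)) = \<psi> k \<otimes> (\<psi> (expr_app G \<alpha> x) \<otimes> \<psi> (expr_app G \<alpha> y))"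
    using \<psi> \<alpha> x y by (simp add: eq expr_app_closed hom_mult)
  then show "\<exists>z \<in> center G. \<psi> (expr_app G \<alpha> (x \<otimes> y)) = z \<otimes> (\<psi> (expr_app G \<alpha> x) \<otimes> \<psi> (expr_app G \<alpha> y))"
    using \<psi>_derived k by blast
  show "commut G (\<psi> (expr_app G \<alpha> x)) (\<psi> (expr_app G \<alpha> y)) \<in> center G"
    using \<psi>_commut \<alpha> x y by (simp add: expr_app_closed)
qed

section \<open>Skew braces and their solutions\<close>

definition brace_solution :: "'a monoid \<Rightarrow> 'a monoid \<Rightarrow> 'a \<times> 'a \<Rightarrow> 'a \<times> 'a" where
  "brace_solution A M = (\<lambda>(x, y).
     let a = inv\<^bsub>A\<^esub> x \<otimes>\<^bsub>A\<^esub> (x \<otimes>\<^bsub>M\<^esub> y) in (a, inv\<^bsub>M\<^esub> a \<otimes>\<^bsub>M\<^esub> x \<otimes>\<^bsub>M\<^esub> y))"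

locale skew_brace = A: group A + M: group M for A M :: "'a monoid" +
  assumes carrier_M [simp]: "carrier M = carrier A"
    and brace: "\<lbrakk>a \<in> carrier A; b \<in> carrier A; c \<in> carrier A\<rbrakk> \<Longrightarrow>
      a \<otimes>\<^bsub>M\<^esub> (b \<otimes>\<^bsub>A\<^esub> c) = (a \<otimes>\<^bsub>M\<^esub> b) \<otimes>\<^bsub>A\<^esub> (inv\<^bsub>A\<^esub> a \<otimes>\<^bsub>A\<^esub> (a \<otimes>\<^bsub>M\<^esub> c))"
begin

lemmas M_closed [unfolded carrier_M, simp] = M.m_closed M.inv_closed

lemma one_M [simp]: "\<one>\<^bsub>M\<^esub> = \<one>\<^bsub>A\<^esub>"
proof -
  have right_one: "a \<otimes>\<^bsub>M\<^esub> \<one>\<^bsub>A\<^esub> = a" if a: "a \<in> carrier A" for a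
  proof -
    have "(a \<otimes>\<^bsub>M\<^esub> \<one>\<^bsub>A\<^esub>) \<otimes>\<^bsub>A\<^esub> (inv\<^bsub>A\<^esub> a \<otimes>\<^bsub>A\<^esub> (a \<otimes>\<^bsub>M\<^esub> \<one>\<^bsub>A\<^esub>)) = a \<otimes>\<^bsub>M\<^esub> \<one>\<^bsub>A\<^esub>"
      using brace [of a "\<one>\<^bsub>A\<^esub>" "\<one>\<^bsub>A\<^esub>"] a by simp
    then have "inv\<^bsub>A\<^esub> a \<otimes>\<^bsub>A\<^esub> (a \<otimes>\<^bsub>M\<^esub> \<one>\<^bsub>A\<^esub>) = \<one>\<^bsub>A\<^esub>"
      using a by simp
    then show ?thesis
      using a A.mult_inv_cancel_left [of a "a \<otimes>\<^bsub>M\<^esub> \<one>\<^bsub>A\<^esub>"] by simp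
  qed
  show ?thesis
    using right_one [of "\<one>\<^bsub>M\<^esub>"] M.one_closed M.l_one A.one_closed by simp
qed

lemmas M_one_inv [unfolded carrier_M one_M, simp] = M.l_one M.r_one M.l_inv M.r_inv M.inv_inv

lemma M_assoc:
  "\<lbrakk>x \<in> carrier A; y \<in> carrier A; z \<in> carrier A\<rbrakk> \<Longrightarrow> x \<otimes>\<^bsub>M\<^esub> y \<otimes>\<^bsub>M\<^esub> z = x \<otimes>\<^bsub>M\<^esub> (y \<otimes>\<^bsub>M\<^esub> z)"
  by (simp add: M.m_assoc)

lemma M_cancel_right [simp]:
  "\<lbrakk>x \<in> carrier A; y \<in> carrier A\<rbrakk> \<Longrightarrow> y \<otimes>\<^bsub>M\<^esub> inv\<^bsub>M\<^esub> x \<otimes>\<^bsub>M\<^esub> x = y"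
  "\<lbrakk>x \<in> carrier A; y \<in> carrier A\<rbrakk> \<Longrightarrow> y \<otimes>\<^bsub>M\<^esub> x \<otimes>\<^bsub>M\<^esub> inv\<^bsub>M\<^esub> x = y"
  by (simp_all add: M_assoc)

definition lam :: "'a \<Rightarrow> 'a \<Rightarrow> 'a" where
  "lam a b = inv\<^bsub>A\<^esub> a \<otimes>\<^bsub>A\<^esub> (a \<otimes>\<^bsub>M\<^esub> b)"

lemma lam_closed [simp]: "\<lbrakk>a \<in> carrier A; b \<in> carrier A\<rbrakk> \<Longrightarrow> lam a b \<in> carrier A"
  by (simp add: lam_def)

lemma mult_M_eq_lam: "\<lbrakk>a \<in> carrier A; b \<in> carrier A\<rbrakk> \<Longrightarrow> a \<otimes>\<^bsub>M\<^esub> b = a \<otimes>\<^bsub>A\<^esub> lam a b"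
  by (simp add: lam_def)

lemma lam_mult:
  "\<lbrakk>a \<in> carrier A; b \<in> carrier A; c \<in> carrier A\<rbrakk> \<Longrightarrow>
    lam a (b \<otimes>\<^bsub>A\<^esub> c) = lam a b \<otimes>\<^bsub>A\<^esub> lam a c"
  by (simp add: lam_def brace A.m_assoc)

lemma lam_one_right [simp]: "a \<in> carrier A \<Longrightarrow> lam a \<one>\<^bsub>A\<^esub> = \<one>\<^bsub>A\<^esub>"
  by (simp add: lam_def)

lemma lam_one_left [simp]: "b \<in> carrier A \<Longrightarrow> lam \<one>\<^bsub>A\<^esub> b = b"
  by (simp add: lam_def)

lemma lam_inv:
  assumes "a \<in> carrier A" "b \<in> carrier A"
  shows "lam a (inv\<^bsub>A\<^esub> b) = inv\<^bsub>A\<^esub> (lam a b)"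
proof -
  have "lam a (inv\<^bsub>A\<^esub> b) \<otimes>\<^bsub>A\<^esub> lam a b = \<one>\<^bsub>A\<^esub>"
    using assms lam_mult [of a "inv\<^bsub>A\<^esub> b" b] by simp
  then show ?thesis
    using assms by (simp add: A.inv_equality)
qed

lemma lam_mult_M:
  assumes a: "a \<in> carrier A" and b: "b \<in> carrier A" and c: "c \<in> carrier A"
  shows "lam (a \<otimes>\<^bsub>M\<^esub> b) c = lam a (lam b c)"
proof -
  have "(a \<otimes>\<^bsub>M\<^esub> b) \<otimes>\<^bsub>A\<^esub> lam (a \<otimes>\<^bsub>M\<^esub> b) c = a \<otimes>\<^bsub>M\<^esub> b \<otimes>\<^bsub>M\<^esub> c"
    using a b c by (simp add: mult_M_eq_lam)
  also have "\<dots> = a \<otimes>\<^bsub>M\<^esub> (b \<otimes>\<^bsub>A\<^esub> lam b c)"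
    using a b c by (simp add: M_assoc mult_M_eq_lam [of b c])
  also have "\<dots> = (a \<otimes>\<^bsub>M\<^esub> b) \<otimes>\<^bsub>A\<^esub> lam a (lam b c)"
    unfolding lam_def [of a "lam b c"] using a b c by (simp add: brace)
  finally show ?thesis
    using a b c by simp
qed

lemma lam_inv_M_self [simp]: "a \<in> carrier A \<Longrightarrow> lam a (inv\<^bsub>M\<^esub> a) = inv\<^bsub>A\<^esub> a"
  by (simp add: lam_def)

lemma lam_inv_M_cancel [simp]:
  "\<lbrakk>a \<in> carrier A; c \<in> carrier A\<rbrakk> \<Longrightarrow> lam (inv\<^bsub>M\<^esub> a) (lam a c) = c"
  using lam_mult_M [of "inv\<^bsub>M\<^esub> a" a c] by simp

lemma lam_cancel_inv_M [simp]:
  "\<lbrakk>a \<in> carrier A; c \<in> carrier A\<rbrakk> \<Longrightarrow> lam a (lam (inv\<^bsub>M\<^esub> a) c) = c"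
  using lam_mult_M [of a "inv\<^bsub>M\<^esub> a" c] by simp

lemma brace_solution_eq:
  "brace_solution A M (x, y) = (lam x y, inv\<^bsub>M\<^esub> (lam x y) \<otimes>\<^bsub>M\<^esub> x \<otimes>\<^bsub>M\<^esub> y)"
  by (simp add: brace_solution_def lam_def Let_def)

lemma brace_solution_closed:
  "\<lbrakk>x \<in> carrier A; y \<in> carrier A\<rbrakk> \<Longrightarrow> brace_solution A M (x, y) \<in> carrier A \<times> carrier A"
  by (simp add: brace_solution_eq)

lemma brace_solution_mult_M:
  "\<lbrakk>x \<in> carrier A; y \<in> carrier A; brace_solution A M (x, y) = (a, b)\<rbrakk> \<Longrightarrow>
    a \<otimes>\<^bsub>M\<^esub> b = x \<otimes>\<^bsub>M\<^esub> y"
  by (auto simp: brace_solution_eq M_assoc)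

definition prefix_prod :: "'a \<times> 'a \<times> 'a \<Rightarrow> 'a \<times> 'a \<times> 'a" where
  "prefix_prod = (\<lambda>(x, y, z). (x, x \<otimes>\<^bsub>M\<^esub> y, x \<otimes>\<^bsub>M\<^esub> y \<otimes>\<^bsub>M\<^esub> z))"

definition lin12 :: "'a \<times> 'a \<times> 'a \<Rightarrow> 'a \<times> 'a \<times> 'a" where
  "lin12 = (\<lambda>(p, q, r). (inv\<^bsub>A\<^esub> p \<otimes>\<^bsub>A\<^esub> q, q, r))"

definition lin23 :: "'a \<times> 'a \<times> 'a \<Rightarrow> 'a \<times> 'a \<times> 'a" where
  "lin23 = (\<lambda>(p, q, r). (p, p \<otimes>\<^bsub>A\<^esub> inv\<^bsub>A\<^esub> q \<otimes>\<^bsub>A\<^esub> r, r))"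

lemma inj_on_prefix_prod: "inj_on prefix_prod (carrier A \<times> carrier A \<times> carrier A)"
  by (rule inj_onI) (auto simp: prefix_prod_def)

lemma R12_closed:
  "t \<in> carrier A \<times> carrier A \<times> carrier A \<Longrightarrow>
    R12 (brace_solution A M) t \<in> carrier A \<times> carrier A \<times> carrier A"
  by (auto simp: R12_def brace_solution_eq)

lemma R23_closed:
  "t \<in> carrier A \<times> carrier A \<times> carrier A \<Longrightarrow>
    R23 (brace_solution A M) t \<in> carrier A \<times> carrier A \<times> carrier A"
  by (auto simp: R23_def brace_solution_eq)

lemma prefix_prod_R12:
  assumes "t \<in> carrier A \<times> carrier A \<times> carrier A"
  shows "prefix_prod (R12 (brace_solution A M) t) = lin12 (prefix_prod t)"
proof -
  obtain x y z where t: "t = (x, y, z)" and xyz: "x \<in> carrier A" "y \<in> carrier A" "z \<in> carrier A"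
    using assms by auto
  obtain a b where ab: "brace_solution A M (x, y) = (a, b)" by fastforce
  have "a = lam x y"
    using ab by (simp add: brace_solution_eq)
  moreover have "a \<otimes>\<^bsub>M\<^esub> b = x \<otimes>\<^bsub>M\<^esub> y"
    using brace_solution_mult_M [OF xyz(1,2) ab] .
  ultimately show ?thesis
    using ab by (simp add: t R12_def prefix_prod_def lin12_def lam_def)
qed

lemma prefix_prod_R23:
  assumes "t \<in> carrier A \<times> carrier A \<times> carrier A"
  shows "prefix_prod (R23 (brace_solution A M) t) = lin23 (prefix_prod t)"
proof -
  obtain x y z where t: "t = (x, y, z)" and xyz: "x \<in> carrier A" "y \<in> carrier A" "z \<in> carrier A"
    using assms by auto
  obtain a b where ab: "brace_solution A M (y, z) = (a, b)" by fastforce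
  have a: "a = lam y z"
    using ab by (simp add: brace_solution_eq)
  have "a \<in> carrier A" "b \<in> carrier A"
    using brace_solution_closed [of y z] xyz ab by auto
  then have "x \<otimes>\<^bsub>M\<^esub> a \<otimes>\<^bsub>M\<^esub> b = x \<otimes>\<^bsub>M\<^esub> y \<otimes>\<^bsub>M\<^esub> z"
    using xyz brace_solution_mult_M [OF xyz(2,3) ab] by (simp add: M_assoc)
  moreover have "x \<otimes>\<^bsub>M\<^esub> a = x \<otimes>\<^bsub>A\<^esub> inv\<^bsub>A\<^esub> (x \<otimes>\<^bsub>M\<^esub> y) \<otimes>\<^bsub>A\<^esub> (x \<otimes>\<^bsub>M\<^esub> y \<otimes>\<^bsub>M\<^esub> z)"
  proof -
    have "x \<otimes>\<^bsub>M\<^esub> a = x \<otimes>\<^bsub>A\<^esub> lam x (inv\<^bsub>A\<^esub> y \<otimes>\<^bsub>A\<^esub> (y \<otimes>\<^bsub>M\<^esub> z))"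
      using xyz by (simp add: a mult_M_eq_lam [of x] lam_def [of y z])
    also have "\<dots> = x \<otimes>\<^bsub>A\<^esub> (inv\<^bsub>A\<^esub> (lam x y) \<otimes>\<^bsub>A\<^esub> lam x (y \<otimes>\<^bsub>M\<^esub> z))"
      using xyz by (simp add: lam_mult lam_inv)
    also have "\<dots> = x \<otimes>\<^bsub>A\<^esub> inv\<^bsub>A\<^esub> (x \<otimes>\<^bsub>M\<^esub> y) \<otimes>\<^bsub>A\<^esub> (x \<otimes>\<^bsub>M\<^esub> y \<otimes>\<^bsub>M\<^esub> z)"
      using xyz by (simp add: lam_def A.m_assoc A.inv_mult_group M_assoc)
    finally show ?thesis .
  qed
  ultimately show ?thesis
    using t ab by (simp add: R23_def prefix_prod_def lin23_def)
qed

lemma lin_braid: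
  "t \<in> carrier A \<times> carrier A \<times> carrier A \<Longrightarrow> lin12 (lin23 (lin12 t)) = lin23 (lin12 (lin23 t))"
  by (auto simp: lin12_def lin23_def A.m_assoc A.inv_mult_group)

lemma YBE_solution_brace_solution: "YBE_solution (carrier A) (brace_solution A M)"
  unfolding YBE_solution_def
proof (intro conjI ballI)
  fix x y assume "x \<in> carrier A" "y \<in> carrier A"
  then show "fst (brace_solution A M (x, y)) \<in> carrier A" "snd (brace_solution A M (x, y)) \<in> carrier A"
    by (simp_all add: brace_solution_eq)
next
  fix x y z assume "x \<in> carrier A" "y \<in> carrier A" "z \<in> carrier A"
  then have t: "(x, y, z) \<in> carrier A \<times> carrier A \<times> carrier A" by simp
  let ?R = "brace_solution A M"
  have "prefix_prod (R12 ?R (R23 ?R (R12 ?R (x, y, z)))) = lin12 (lin23 (lin12 (prefix_prod (x, y, z))))"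
    using t by (simp add: prefix_prod_R12 prefix_prod_R23 R12_closed R23_closed)
  also have "\<dots> = lin23 (lin12 (lin23 (prefix_prod (x, y, z))))"
    using t by (intro lin_braid) (auto simp: prefix_prod_def)
  also have "\<dots> = prefix_prod (R23 ?R (R12 ?R (R23 ?R (x, y, z))))"
    using t by (simp add: prefix_prod_R12 prefix_prod_R23 R12_closed R23_closed)
  finally show "R12 ?R (R23 ?R (R12 ?R (x, y, z))) = R23 ?R (R12 ?R (R23 ?R (x, y, z)))"
    by (rule inj_onD [OF inj_on_prefix_prod])
      (rule R12_closed R23_closed t)+
qed

lemma bij_betw_lam: "a \<in> carrier A \<Longrightarrow> bij_betw (lam a) (carrier A) (carrier A)"
  by (rule bij_betw_byWitness [where f' = "lam (inv\<^bsub>M\<^esub> a)"]) auto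

lemma bij_betw_mult_M_right:
  "y \<in> carrier A \<Longrightarrow> bij_betw (\<lambda>x. x \<otimes>\<^bsub>M\<^esub> y) (carrier A) (carrier A)"
  by (rule bij_betw_byWitness [where f' = "\<lambda>u. u \<otimes>\<^bsub>M\<^esub> inv\<^bsub>M\<^esub> y"]) auto

lemma bij_betw_inv_M_lam_mult_M:
  assumes c: "c \<in> carrier A"
  shows "bij_betw (\<lambda>u. inv\<^bsub>M\<^esub> (lam u c) \<otimes>\<^bsub>M\<^esub> u) (carrier A) (carrier A)"
proof (rule bij_betw_byWitness [where f' = "\<lambda>b. inv\<^bsub>M\<^esub> (inv\<^bsub>A\<^esub> (lam b c)) \<otimes>\<^bsub>M\<^esub> b"])
  show "\<forall>u \<in> carrier A. inv\<^bsub>M\<^esub> (inv\<^bsub>A\<^esub> (lam (inv\<^bsub>M\<^esub> (lam u c) \<otimes>\<^bsub>M\<^esub> u) c))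
      \<otimes>\<^bsub>M\<^esub> (inv\<^bsub>M\<^esub> (lam u c) \<otimes>\<^bsub>M\<^esub> u) = u"
  proof
    fix u assume u: "u \<in> carrier A"
    define a where "a = lam u c"
    have a_closed: "a \<in> carrier A" using u c by (simp add: a_def)
    have "lam (inv\<^bsub>M\<^esub> a \<otimes>\<^bsub>M\<^esub> u) c = lam (inv\<^bsub>M\<^esub> a) a"
      using u c a_closed by (simp add: lam_mult_M a_def)
    also have "\<dots> = inv\<^bsub>A\<^esub> (inv\<^bsub>M\<^esub> a)"
      using lam_inv_M_self [of "inv\<^bsub>M\<^esub> a"] a_closed by simp
    finally show "inv\<^bsub>M\<^esub> (inv\<^bsub>A\<^esub> (lam (inv\<^bsub>M\<^esub> (lam u c) \<otimes>\<^bsub>M\<^esub> u) c))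
      \<otimes>\<^bsub>M\<^esub> (inv\<^bsub>M\<^esub> (lam u c) \<otimes>\<^bsub>M\<^esub> u) = u"
      using u a_closed by (simp add: a_def [symmetric])
  qed
  show "\<forall>b \<in> carrier A. inv\<^bsub>M\<^esub> (lam (inv\<^bsub>M\<^esub> (inv\<^bsub>A\<^esub> (lam b c)) \<otimes>\<^bsub>M\<^esub> b) c)
      \<otimes>\<^bsub>M\<^esub> (inv\<^bsub>M\<^esub> (inv\<^bsub>A\<^esub> (lam b c)) \<otimes>\<^bsub>M\<^esub> b) = b"
  proof
    fix b assume b: "b \<in> carrier A"
    define a where "a = inv\<^bsub>M\<^esub> (inv\<^bsub>A\<^esub> (lam b c))"
    have a_closed: "a \<in> carrier A" using b c by (simp add: a_def)
    have lam_b: "lam b c = inv\<^bsub>A\<^esub> (inv\<^bsub>M\<^esub> a)"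
      using b c by (simp add: a_def)
    have "lam (a \<otimes>\<^bsub>M\<^esub> b) c = a"
      using a_closed b c by (simp add: lam_mult_M lam_b lam_inv)
    then show "inv\<^bsub>M\<^esub> (lam (inv\<^bsub>M\<^esub> (inv\<^bsub>A\<^esub> (lam b c)) \<otimes>\<^bsub>M\<^esub> b) c)
      \<otimes>\<^bsub>M\<^esub> (inv\<^bsub>M\<^esub> (inv\<^bsub>A\<^esub> (lam b c)) \<otimes>\<^bsub>M\<^esub> b) = b"
      using a_closed b by (simp add: a_def [symmetric])
  qed
qed (use c in auto)

lemma snd_brace_solution:
  assumes x: "x \<in> carrier A" and y: "y \<in> carrier A"
  shows "snd (brace_solution A M (x, y)) =
    inv\<^bsub>M\<^esub> (lam (x \<otimes>\<^bsub>M\<^esub> y) (inv\<^bsub>A\<^esub> (inv\<^bsub>M\<^esub> y))) \<otimes>\<^bsub>M\<^esub> (x \<otimes>\<^bsub>M\<^esub> y)"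
proof -
  have "lam (x \<otimes>\<^bsub>M\<^esub> y) (inv\<^bsub>A\<^esub> (inv\<^bsub>M\<^esub> y)) = lam x y"
    using x y by (simp add: lam_mult_M lam_inv)
  then show ?thesis
    using x y by (simp add: brace_solution_eq M_assoc)
qed

lemma nondegenerate_brace_solution: "nondegenerate (carrier A) (brace_solution A M)"
  unfolding nondegenerate_def
proof (intro conjI ballI)
  fix x assume "x \<in> carrier A"
  then show "bij_betw (\<lambda>y. fst (brace_solution A M (x, y))) (carrier A) (carrier A)"
    by (simp add: brace_solution_eq bij_betw_lam)
next
  fix y assume y: "y \<in> carrier A"
  let ?c = "inv\<^bsub>A\<^esub> (inv\<^bsub>M\<^esub> y)"
  have "bij_betw ((\<lambda>u. inv\<^bsub>M\<^esub> (lam u ?c) \<otimes>\<^bsub>M\<^esub> u) \<circ> (\<lambda>x. x \<otimes>\<^bsub>M\<^esub> y)) (carrier A) (carrier A)"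
    using y by (intro bij_betw_trans [OF bij_betw_mult_M_right bij_betw_inv_M_lam_mult_M]) simp_all
  moreover have "bij_betw (\<lambda>x. snd (brace_solution A M (x, y))) (carrier A) (carrier A) \<longleftrightarrow>
      bij_betw ((\<lambda>u. inv\<^bsub>M\<^esub> (lam u ?c) \<otimes>\<^bsub>M\<^esub> u) \<circ> (\<lambda>x. x \<otimes>\<^bsub>M\<^esub> y)) (carrier A) (carrier A)"
    using y by (intro bij_betw_cong) (simp add: snd_brace_solution)
  ultimately show "bij_betw (\<lambda>x. snd (brace_solution A M (x, y))) (carrier A) (carrier A)"
    by simp
qed

end

definition opposite :: "'a monoid \<Rightarrow> 'a monoid" where
  "opposite A = A\<lparr>monoid.mult := (\<lambda>x y. y \<otimes>\<^bsub>A\<^esub> x)\<rparr>"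

lemma opposite_simps [simp]:
  "carrier (opposite A) = carrier A"
  "\<one>\<^bsub>opposite A\<^esub> = \<one>\<^bsub>A\<^esub>"
  "x \<otimes>\<^bsub>opposite A\<^esub> y = y \<otimes>\<^bsub>A\<^esub> x"
  by (simp_all add: opposite_def)

lemma opposite_opposite [simp]: "opposite (opposite A) = A"
  by (simp add: opposite_def)

lemma inv_opposite [simp]: "inv\<^bsub>opposite A\<^esub> x = inv\<^bsub>A\<^esub> x"
  unfolding m_inv_def by (simp add: conj_commute)

lemma group_opposite:
  assumes "group A"
  shows "group (opposite A)"
proof -
  interpret A: group A by (rule assms)
  show ?thesis
  proof (rule groupI)
    fix x assume "x \<in> carrier (opposite A)"
    then show "\<exists>y \<in> carrier (opposite A). y \<otimes>\<^bsub>opposite A\<^esub> x = \<one>\<^bsub>opposite A\<^esub>"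
      by (intro bexI [of _ "inv\<^bsub>A\<^esub> x"]) simp_all
  qed (simp_all add: A.m_assoc)
qed

context skew_brace begin

lemma skew_brace_opposite: "skew_brace (opposite A) M"
proof (rule skew_brace.intro [OF group_opposite [OF A.is_group] M.is_group])
  show "skew_brace_axioms (opposite A) M"
    by unfold_locales (simp_all add: brace A.m_assoc)
qed

lemma brace_solution_opposite_cancel:
  assumes x: "x \<in> carrier A" and y: "y \<in> carrier A"
  shows "brace_solution (opposite A) M (brace_solution A M (x, y)) = (x, y)"
proof -
  obtain a b where ab: "brace_solution A M (x, y) = (a, b)" by fastforce
  have a: "a = inv\<^bsub>A\<^esub> x \<otimes>\<^bsub>A\<^esub> (x \<otimes>\<^bsub>M\<^esub> y)"
    using ab by (simp add: brace_solution_eq lam_def)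
  have ab_M: "a \<otimes>\<^bsub>M\<^esub> b = x \<otimes>\<^bsub>M\<^esub> y"
    using brace_solution_mult_M [OF x y ab] .
  have fst_eq: "(a \<otimes>\<^bsub>M\<^esub> b) \<otimes>\<^bsub>A\<^esub> inv\<^bsub>A\<^esub> a = x"
    unfolding ab_M unfolding a using x y by (simp add: A.inv_mult_group A.m_assoc)
  have snd_eq: "inv\<^bsub>M\<^esub> x \<otimes>\<^bsub>M\<^esub> a \<otimes>\<^bsub>M\<^esub> b = y"
    using x y brace_solution_closed [OF x y] ab by (simp add: M_assoc ab_M)
  show ?thesis
    unfolding ab by (simp add: brace_solution_def Let_def fst_eq snd_eq)
qed

lemma brace_solution_cancel_opposite:
  assumes "x \<in> carrier A" "y \<in> carrier A"
  shows "brace_solution A M (brace_solution (opposite A) M (x, y)) = (x, y)"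
proof -
  interpret op: skew_brace "opposite A" M by (rule skew_brace_opposite)
  show ?thesis
    using op.brace_solution_opposite_cancel assms by simp
qed

lemma brace_solution_opposite_if_commute:
  assumes "\<forall>a \<in> carrier A. \<forall>b \<in> carrier A. a \<otimes>\<^bsub>A\<^esub> b = b \<otimes>\<^bsub>A\<^esub> a"
    and "x \<in> carrier A" "y \<in> carrier A"
  shows "brace_solution (opposite A) M (x, y) = brace_solution A M (x, y)"
  using assms by (simp add: brace_solution_def)

lemma brace_solution_opposite_if_involutive:
  assumes inv: "involutive (carrier A) (brace_solution A M)"
    and x: "x \<in> carrier A" and y: "y \<in> carrier A"
  shows "brace_solution (opposite A) M (x, y) = brace_solution A M (x, y)"
proof -
  obtain a b where ab: "brace_solution A M (x, y) = (a, b)" by fastforce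
  have a: "a \<in> carrier A" and b: "b \<in> carrier A"
    using brace_solution_closed [OF x y] ab by auto
  have "brace_solution A M (a, b) = (x, y)"
    using inv x y ab unfolding involutive_def by metis
  then have "brace_solution (opposite A) M (x, y) = (a, b)"
    using brace_solution_opposite_cancel [OF a b] by simp
  then show ?thesis
    using ab by simp
qed

lemma involutive_brace_solution_iff:
  "involutive (carrier A) (brace_solution A M) \<longleftrightarrow>
    (\<forall>a \<in> carrier A. \<forall>b \<in> carrier A. a \<otimes>\<^bsub>A\<^esub> b = b \<otimes>\<^bsub>A\<^esub> a)"
proof
  assume inv: "involutive (carrier A) (brace_solution A M)"
  show "\<forall>a \<in> carrier A. \<forall>b \<in> carrier A. a \<otimes>\<^bsub>A\<^esub> b = b \<otimes>\<^bsub>A\<^esub> a"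
  proof (intro ballI)
    fix a b assume a: "a \<in> carrier A" and b: "b \<in> carrier A"
    define x where "x = inv\<^bsub>A\<^esub> a"
    define y where "y = inv\<^bsub>M\<^esub> x \<otimes>\<^bsub>M\<^esub> b"
    have x: "x \<in> carrier A" and y: "y \<in> carrier A" and xy: "x \<otimes>\<^bsub>M\<^esub> y = b"
      using a b by (simp_all add: x_def y_def)
    have "fst (brace_solution (opposite A) M (x, y)) = fst (brace_solution A M (x, y))"
      using brace_solution_opposite_if_involutive [OF inv x y] by simp
    then have "b \<otimes>\<^bsub>A\<^esub> inv\<^bsub>A\<^esub> x = inv\<^bsub>A\<^esub> x \<otimes>\<^bsub>A\<^esub> b"
      by (simp add: brace_solution_def Let_def xy)
    then show "a \<otimes>\<^bsub>A\<^esub> b = b \<otimes>\<^bsub>A\<^esub> a"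
      using a by (simp add: x_def)
  qed
next
  assume "\<forall>a \<in> carrier A. \<forall>b \<in> carrier A. a \<otimes>\<^bsub>A\<^esub> b = b \<otimes>\<^bsub>A\<^esub> a"
  then show "involutive (carrier A) (brace_solution A M)"
    unfolding involutive_def
    by (metis brace_solution_closed brace_solution_opposite_cancel brace_solution_opposite_if_commute
        mem_Times_iff prod.collapse)
qed

end

section \<open>Two compatible twisting maps give a skew brace\<close>

locale twisting_pair = F: twisting_map G f + H: twisting_map G h
  for G (structure) and f h +
  assumes commut_cross_center:
    "\<lbrakk>x \<in> carrier G; y \<in> carrier G\<rbrakk> \<Longrightarrow> commut G (f x) (h y) \<in> center G"
begin

lemma conj_by_cross_commute:
  "\<lbrakk>x \<in> carrier G; y \<in> carrier G; w \<in> carrier G\<rbrakk> \<Longrightarrow>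
    conj_by G (f x) (conj_by G (h y) w) = conj_by G (h y) (conj_by G (f x) w)"
  by (rule F.conj_by_commute) (simp_all add: commut_cross_center)

lemma twisted_brace:
  assumes a: "a \<in> carrier G" and b: "b \<in> carrier G" and c: "c \<in> carrier G"
  shows "a \<otimes>\<^bsub>twisted G h\<^esub> (b \<otimes>\<^bsub>twisted G f\<^esub> c) =
    (a \<otimes>\<^bsub>twisted G h\<^esub> b) \<otimes>\<^bsub>twisted G f\<^esub>
      (inv\<^bsub>twisted G f\<^esub> a \<otimes>\<^bsub>twisted G f\<^esub> (a \<otimes>\<^bsub>twisted G h\<^esub> c))"
proof -
  have inner: "inv\<^bsub>twisted G f\<^esub> a \<otimes>\<^bsub>twisted G f\<^esub> (a \<otimes>\<^bsub>twisted G h\<^esub> c)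
      = conj_by G (f (inv a)) (conj_by G (h a) c)"
    using a c by (simp add: F.inv_twisted F.twisted_mult H.twisted_mult F.conj_by_f_conj_by
        F.conj_by_mult [symmetric])
  have "(a \<otimes>\<^bsub>twisted G h\<^esub> b) \<otimes>\<^bsub>twisted G f\<^esub> conj_by G (f (inv a)) (conj_by G (h a) c)
      = (a \<otimes> conj_by G (h a) b) \<otimes>
          conj_by G (f a) (conj_by G (f b) (conj_by G (f (inv a)) (conj_by G (h a) c)))"
    using a b c by (simp add: F.twisted_mult H.twisted_mult F.conj_by_f_mult F.conj_by_f_conj_by)
  also have "\<dots> = (a \<otimes> conj_by G (h a) b) \<otimes> conj_by G (f b) (conj_by G (h a) c)"
    using a b c F.conj_by_f_commute [of b "inv a"] by simp
  also have "\<dots> = a \<otimes>\<^bsub>twisted G h\<^esub> (b \<otimes>\<^bsub>twisted G f\<^esub> c)"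
    using a b c by (simp add: F.twisted_mult H.twisted_mult conj_by_cross_commute F.conj_by_mult F.m_assoc)
  finally show ?thesis
    using inner by simp
qed

lemma skew_brace_twisted: "skew_brace (twisted G f) (twisted G h)"
  by (intro skew_brace.intro skew_brace_axioms.intro F.group_twisted H.group_twisted)
    (simp_all add: twisted_brace)

end

lemma (in group) comm_group_iff_commute:
  "comm_group G \<longleftrightarrow> (\<forall>x \<in> carrier G. \<forall>y \<in> carrier G. x \<otimes> y = y \<otimes> x)"
  by (metis comm_group_def comm_monoid.m_comm group_comm_groupI)

theorem corollary3p5:
  fixes G :: "('a, 'b) monoid_scheme"
    and \<psi> :: "nat \<Rightarrow> 'a \<Rightarrow> 'a"
    and t i j :: nat
    and \<alpha> \<beta> :: "(int \<times> ('a \<Rightarrow> 'a)) list"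
    and R R' :: "'a \<times> 'a \<Rightarrow> 'a \<times> 'a"
  assumes "group G"
    and "\<not> comm_group G"
    and "\<forall>k \<in> {1..t}. \<psi> k \<in> hom G G"
    and "\<forall>k \<in> {1..t}. \<psi> k ` derived G (carrier G) \<subseteq> center G"
    and "\<forall>k \<in> {1..t}. \<forall>l \<in> {1..t}. \<forall>a \<in> carrier G. \<forall>b \<in> carrier G.
           commut G (\<psi> k a) (\<psi> l b) \<in> center G"
    and "i \<in> {1..t}" and "j \<in> {1..t}"
    and "\<alpha> \<in> exprs G" and "\<beta> \<in> exprs G"
    and "\<And>g h. R (g, h) =
          (let ci = circ G (\<psi> i) \<alpha>; cj = circ G (\<psi> j) \<beta>;
               tl = inv\<^bsub>circ_grp G (\<psi> i) \<alpha>\<^esub> g;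
               a = ci tl (cj g h)
           in (a, cj (cj (inv\<^bsub>circ_grp G (\<psi> j) \<beta>\<^esub> a) g) h))"
    and "\<And>g h. R' (g, h) =
          (let ci = circ G (\<psi> i) \<alpha>; cj = circ G (\<psi> j) \<beta>;
               tl = inv\<^bsub>circ_grp G (\<psi> i) \<alpha>\<^esub> g;
               a = ci (cj g h) tl
           in (a, cj (cj (inv\<^bsub>circ_grp G (\<psi> j) \<beta>\<^esub> a) g) h))"
  shows "YBE_solution (carrier G) R \<and> nondegenerate (carrier G) R \<and>
         YBE_solution (carrier G) R' \<and> nondegenerate (carrier G) R' \<and>
         (\<forall>x \<in> carrier G. \<forall>y \<in> carrier G. R' (R (x, y)) = (x, y) \<and> R (R' (x, y)) = (x, y)) \<and>
         (involutive (carrier G) R \<longleftrightarrow> comm_group (circ_grp G (\<psi> i) \<alpha>)) \<and>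
         (involutive (carrier G) R \<longrightarrow> (\<forall>x \<in> carrier G. \<forall>y \<in> carrier G. R' (x, y) = R (x, y)))"
proof -
  interpret G: group G by fact
  let ?A = "twisted G (\<lambda>g. \<psi> i (expr_app G \<alpha> g))"
  let ?M = "twisted G (\<lambda>g. \<psi> j (expr_app G \<beta> g))"
  have "twisting_pair G (\<lambda>g. \<psi> i (expr_app G \<alpha> g)) (\<lambda>g. \<psi> j (expr_app G \<beta> g))"
    using assms(3-9)
    by (intro twisting_pair.intro twisting_pair_axioms.intro G.twisting_map_expr_app)
      (auto simp: G.expr_app_closed)
  then interpret skew_brace ?A ?M
    by (rule twisting_pair.skew_brace_twisted)
  interpret op: skew_brace "opposite ?A" ?M
    by (rule skew_brace_opposite)
  have R: "R = brace_solution ?A ?M" and R': "R' = brace_solution (opposite ?A) ?M"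
    by (auto simp: fun_eq_iff assms(10,11) brace_solution_def Let_def circ_eq_mult_twisted circ_grp_eq_twisted)
  show ?thesis
    unfolding R R' circ_grp_eq_twisted A.comm_group_iff_commute
    using YBE_solution_brace_solution op.YBE_solution_brace_solution
      nondegenerate_brace_solution op.nondegenerate_brace_solution
      brace_solution_opposite_cancel brace_solution_cancel_opposite
      involutive_brace_solution_iff brace_solution_opposite_if_involutive
    by simp
qed

end
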